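(* Let $R$ be a profile of strict linear orders over bundles. An assignment $P$ admits no generalized cycle (w.r.t. $R$) if and only if $P$ is the output, on $R$, of some eating algorithm, i.e., there exist eating speed functions $\omega=(\omega_j)_{j\le n}$ such that the eating algorithm with speeds $\omega$ outputs $P$.
   Context: Setting: $N=\{1,\dots,n\}$ agents; $M=D_1\cup\dots\cup D_p$ items with pairwise disjoint types, $|D_i|=n$, unit supply; bundles $\mathcal D=D_1\times\dots\times D_p$; strict linear orders $\succ_j$ on $\mathcal D$. An assignment is an $n\times|\mathcal D|$ matrix $(p_{j,x})$ with entries in $[0,1]$, rows summing to $1$, and $\sum_j\sum_{x\ni o}p_{j,x}=1$ for every item $o$. $(x,\hat x)$ is an improvable tuple for $P$ if some agent $j$ has $x\succ_j\hat x$ and $p_{j,\hat x}>0$. A nonempty set $C$ of improvable tuples is a generalized cycle if for every item $o$: if some $(x_1,\hat x_1)\in C$ has $o\in x_1$, then some $(x_2,\hat x_2)\in C$ has $o\in\hat x_2$. Eating algorithms: an eating speed function for agent $j$ is a nonnegative integrable function $\omega_j:[0,1]\to\mathbb R_{\ge0}$ with $\int_0^1\omega_j(t)\,dt=1$. Given $\omega=(\omega_j)_j$, items start with supply $1$; a bundle is available if all its items have positive remaining supply. For $t\in[0,1]$, each agent $j$ eats her $\succ_j$-most-preferred available bundle at instantaneous rate $\omega_j(t)$: $p_{j,x}$ for that bundle $x$ grows at rate $\omega_j(t)$ and each item of $x$ is consumed at that rate. When an item's supply reaches $0$ it is exhausted, all bundles containing it become unavailable, and agents switch to their next most preferred available bundle.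 The process stops at time $1$ or when all items are exhausted; the accumulated matrix $(p_{j,x})$ is the output. *)

theory Defs
  imports "HOL-Analysis.Analysis"
begin

text \<open>Agents are 0..n-1. Item types are 0..p-1; the items of type i are the pairs (i,k), k < n,
  so the types are pairwise disjoint and each has n items. A bundle picks one item of each type
  and is represented extensionally as a function x with x i < n for i < p.\<close>

type_synonym bundl = "nat \<Rightarrow> nat"
type_synonym item = "nat \<times> nat"

definition Items :: "nat \<Rightarrow> nat \<Rightarrow> item set" where
  "Items n p = {..<p} \<times> {..<n}"

definition Bundles :: "nat \<Rightarrow> nat \<Rightarrow> bundl set" where
  "Bundles n p = PiE {..<p} (\<lambda>_. {..<n})"

definition item_in :: "nat \<Rightarrow> item \<Rightarrow> bundl \<Rightarrow> bool" where
  "item_in p it x \<longleftrightarrow> fst it < p \<and> x (fst it) = snd it"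

text \<open>A preference profile: R j is agent j's strict order, (x,y) \<in> R j meaning x \<succ>_j y.\<close>
definition is_profile :: "nat \<Rightarrow> nat \<Rightarrow> (nat \<Rightarrow> bundl rel) \<Rightarrow> bool" where
  "is_profile n p R \<longleftrightarrow>
     (\<forall>j<n. R j \<subseteq> Bundles n p \<times> Bundles n p \<and> strict_linear_order_on (Bundles n p) (R j))"

text \<open>Assignments: P j x is the probability that agent j receives bundle x.\<close>
definition is_assignment :: "nat \<Rightarrow> nat \<Rightarrow> (nat \<Rightarrow> bundl \<Rightarrow> real) \<Rightarrow> bool" where
  "is_assignment n p P \<longleftrightarrow>
     (\<forall>j<n. \<forall>x\<in>Bundles n p. 0 \<le> P j x \<and> P j x \<le> 1) \<and>
     (\<forall>j<n. (\<Sum>x\<in>Bundles n p. P j x) = 1) \<and>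
     (\<forall>it\<in>Items n p. (\<Sum>j<n. \<Sum>x\<in>{x\<in>Bundles n p. item_in p it x}. P j x) = 1)"

definition improvable :: "nat \<Rightarrow> nat \<Rightarrow> (nat \<Rightarrow> bundl rel) \<Rightarrow> (nat \<Rightarrow> bundl \<Rightarrow> real)
    \<Rightarrow> bundl \<Rightarrow> bundl \<Rightarrow> bool" where
  "improvable n p R P x xh \<longleftrightarrow>
     x \<in> Bundles n p \<and> xh \<in> Bundles n p \<and> (\<exists>j<n. (x, xh) \<in> R j \<and> P j xh > 0)"

definition generalized_cycle :: "nat \<Rightarrow> nat \<Rightarrow> (nat \<Rightarrow> bundl rel) \<Rightarrow> (nat \<Rightarrow> bundl \<Rightarrow> real)
    \<Rightarrow> (bundl \<times> bundl) set \<Rightarrow> bool" where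
  "generalized_cycle n p R P C \<longleftrightarrow>
     C \<noteq> {} \<and> (\<forall>(x, xh)\<in>C. improvable n p R P x xh) \<and>
     (\<forall>it. (\<exists>(x1, xh1)\<in>C. item_in p it x1) \<longrightarrow> (\<exists>(x2, xh2)\<in>C. item_in p it xh2))"

definition eating_speeds :: "nat \<Rightarrow> (nat \<Rightarrow> real \<Rightarrow> real) \<Rightarrow> bool" where
  "eating_speeds n \<omega> \<longleftrightarrow>
     (\<forall>j<n. (\<forall>t\<in>{0..1}. 0 \<le> \<omega> j t) \<and> \<omega> j integrable_on {0..1} \<and> integral {0..1} (\<omega> j) = 1)"

text \<open>A trajectory: q t j x is the amount of bundle x eaten by agent j up to time t.\<close>
definition rem_supply :: "nat \<Rightarrow> nat \<Rightarrow> (real \<Rightarrow> nat \<Rightarrow> bundl \<Rightarrow> real) \<Rightarrow> real \<Rightarrow> item \<Rightarrow> real" where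
  "rem_supply n p q t it = 1 - (\<Sum>j<n. \<Sum>x\<in>{x\<in>Bundles n p. item_in p it x}. q t j x)"

definition available :: "nat \<Rightarrow> nat \<Rightarrow> (real \<Rightarrow> nat \<Rightarrow> bundl \<Rightarrow> real) \<Rightarrow> real \<Rightarrow> bundl \<Rightarrow> bool" where
  "available n p q t x \<longleftrightarrow> x \<in> Bundles n p \<and> (\<forall>it. item_in p it x \<longrightarrow> rem_supply n p q t it > 0)"

definition eats :: "nat \<Rightarrow> nat \<Rightarrow> (nat \<Rightarrow> bundl rel) \<Rightarrow> (real \<Rightarrow> nat \<Rightarrow> bundl \<Rightarrow> real)
    \<Rightarrow> nat \<Rightarrow> real \<Rightarrow> bundl \<Rightarrow> bool" where
  "eats n p R q j t x \<longleftrightarrow>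
     available n p q t x \<and> (\<forall>y. available n p q t y \<longrightarrow> y = x \<or> (x, y) \<in> R j)"

definition eating_run :: "nat \<Rightarrow> nat \<Rightarrow> (nat \<Rightarrow> bundl rel) \<Rightarrow> (nat \<Rightarrow> real \<Rightarrow> real)
    \<Rightarrow> (real \<Rightarrow> nat \<Rightarrow> bundl \<Rightarrow> real) \<Rightarrow> bool" where
  "eating_run n p R \<omega> q \<longleftrightarrow>
     (\<forall>t\<in>{0..1}. \<forall>j<n. \<forall>x\<in>Bundles n p.
        ((\<lambda>\<tau>. if eats n p R q j \<tau> x then \<omega> j \<tau> else 0) has_integral q t j x) {0..t})"

definition eating_output :: "nat \<Rightarrow> nat \<Rightarrow> (nat \<Rightarrow> bundl rel) \<Rightarrow> (nat \<Rightarrow> real \<Rightarrow> real)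
    \<Rightarrow> (nat \<Rightarrow> bundl \<Rightarrow> real) \<Rightarrow> bool" where
  "eating_output n p R \<omega> P \<longleftrightarrow>
     (\<exists>q. eating_run n p R \<omega> q \<and> (\<forall>j<n. \<forall>x\<in>Bundles n p. P j x = q 1 j x))"

end

theory Submission imports Defs begin

text \<open>An eating algorithm never produces a generalized cycle: for the earliest moment at which a
  worse bundle of some tuple of the cycle is eaten, an item of the better bundle is already
  exhausted, yet the cycle puts that item into a bundle that is still available at a later moment.

  Conversely, if there is no generalized cycle, every nonempty set of improvable tuples has an item
  that occurs in some better bundle but in no worse bundle. Peeling off such items one at a time
  yields item labels whose minimum over a bundle (its level) strictly increases along every
  improvable tuple. The eating schedule then processes the levels in turn: during the time slot
  [k/M, (k+1)/M) every agent eats her unique level-k bundle x with P j x > 0 at speed M * P j x.\<close>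

lemma finite_Bundles: "finite (Bundles n p)"
  unfolding Bundles_def by (rule finite_PiE) auto

lemma item_in_iff: "item_in p it y \<longleftrightarrow> (\<exists>i<p. it = (i, y i))"
  unfolding item_in_def by (cases it) auto

lemma item_in_Items: "item_in p it y \<Longrightarrow> y \<in> Bundles n p \<Longrightarrow> it \<in> Items n p"
  unfolding item_in_def Items_def Bundles_def by (cases it) (auto simp: PiE_iff)

lemma is_assignment_nonneg: "is_assignment n p P \<Longrightarrow> j < n \<Longrightarrow> x \<in> Bundles n p \<Longrightarrow> 0 \<le> P j x"
  unfolding is_assignment_def by auto

lemma is_profile_strict_linear:
  "is_profile n p R \<Longrightarrow> j < n \<Longrightarrow> strict_linear_order_on (Bundles n p) (R j)"
  unfolding is_profile_def by auto

definition item_closed :: "nat \<Rightarrow> (bundl \<times> bundl) set \<Rightarrow> bool" where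
  "item_closed p C \<longleftrightarrow>
     (\<forall>it. (\<exists>(x1, xh1)\<in>C. item_in p it x1) \<longrightarrow> (\<exists>(x2, xh2)\<in>C. item_in p it xh2))"

lemma generalized_cycle_iff:
  "generalized_cycle n p R P C \<longleftrightarrow>
     C \<noteq> {} \<and> (\<forall>(x, xh)\<in>C. improvable n p R P x xh) \<and> item_closed p C"
  unfolding generalized_cycle_def item_closed_def by blast

subsection \<open>Levels of bundles\<close>

definition min_label :: "nat \<Rightarrow> (item \<Rightarrow> nat) \<Rightarrow> bundl \<Rightarrow> nat" where
  "min_label p l y = Min ((\<lambda>i. l (i, y i)) ` {..<p})"

lemma min_label_le: "i < p \<Longrightarrow> min_label p l y \<le> l (i, y i)"
  unfolding min_label_def by (rule Min_le) auto

lemma min_label_attained: "p \<ge> 1 \<Longrightarrow> \<exists>i<p. min_label p l y = l (i, y i)"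
proof -
  assume "p \<ge> 1"
  then have "min_label p l y \<in> (\<lambda>i. l (i, y i)) ` {..<p}"
    unfolding min_label_def by (intro Min_in) (auto simp: lessThan_empty_iff)
  then show ?thesis by auto
qed

lemma min_label_item_in:
  assumes "item_in p it y"
  shows "min_label p l y \<le> l it"
  using assms min_label_le by (auto simp: item_in_iff)

lemma min_label_shift:
  assumes "p \<ge> 1" and "\<not> item_in p it y"
  shows "min_label p (\<lambda>i. if i = it then 0 else Suc (l i)) y = Suc (min_label p l y)"
proof -
  have "(\<lambda>i. if (i, y i) = it then 0 else Suc (l (i, y i))) ` {..<p} = Suc ` (\<lambda>i. l (i, y i)) ` {..<p}"
    using assms(2) by (force simp: item_in_iff)
  then show ?thesis
    using assms(1) unfolding min_label_def
    by (simp add: mono_Min_commute[of Suc, symmetric] mono_Suc lessThan_empty_iff)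
qed

text \<open>Strong induction on S: an item occurring in a better bundle but in no worse bundle gets
  label 0, which puts every tuple whose better bundle contains it at level 0 and lets the
  induction hypothesis handle the remaining tuples.\<close>

lemma labelling_of_unclosed:
  assumes "finite S" and p: "p \<ge> 1"
    and "\<And>C. C \<subseteq> S \<Longrightarrow> C \<noteq> {} \<Longrightarrow> \<not> item_closed p C"
  shows "\<exists>l. \<forall>(x, xh)\<in>S. min_label p l x < min_label p l xh"
  using assms(1,3)
proof (induction S rule: finite_psubset_induct)
  case (psubset S)
  show ?case
  proof (cases "S = {}")
    case False
    then obtain it where it_better: "\<exists>(x, xh)\<in>S. item_in p it x"
      and it_not_worse: "\<And>x xh. (x, xh) \<in> S \<Longrightarrow> \<not> item_in p it xh"
      using psubset.prems[of S] unfolding item_closed_def by blast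
    define S' where "S' = {(x, xh)\<in>S. \<not> item_in p it x}"
    have "S' \<subset> S" using it_better unfolding S'_def by auto
    with psubset obtain l' where l': "\<forall>(x, xh)\<in>S'. min_label p l' x < min_label p l' xh"
      by (meson psubset_imp_subset subset_trans)
    define l where "l = (\<lambda>i. if i = it then 0 else Suc (l' i))"
    have "min_label p l x < min_label p l xh" if xS: "(x, xh) \<in> S" for x xh
    proof -
      have xh: "min_label p l xh = Suc (min_label p l' xh)"
        unfolding l_def using min_label_shift[OF p it_not_worse[OF xS]] .
      show ?thesis
      proof (cases "item_in p it x")
        case True
        then have "min_label p l x = 0" using min_label_item_in[of p it x l] by (simp add: l_def)
        then show ?thesis using xh by simp
      next
        case False
        then have "(x, xh) \<in> S'" using xS unfolding S'_def by auto
        then show ?thesis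
          using l' xh min_label_shift[OF p False, of l'] unfolding l_def by auto
      qed
    qed
    then show ?thesis by blast
  qed simp
qed

definition ramp :: "real \<Rightarrow> real" where
  "ramp u = max 0 (min 1 u)"

lemma ramp_le_one: "ramp u \<le> 1"
  and ramp_eq_one: "u \<ge> 1 \<Longrightarrow> ramp u = 1"
  and ramp_less_one: "u < 1 \<Longrightarrow> ramp u < 1"
  unfolding ramp_def by auto

definition phase_rate :: "real \<Rightarrow> real \<Rightarrow> real \<Rightarrow> real" where
  "phase_rate M k \<tau> = (if k \<le> M * \<tau> \<and> M * \<tau> < k + 1 then M else 0)"

lemma has_integral_phase_rate:
  fixes M k t :: real
  assumes M: "M > 0" and k: "k \<ge> 0" and t: "t \<ge> 0"
  shows "(phase_rate M k has_integral ramp (M * t - k)) {0..t}"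
proof -
  define lo where "lo = min t (k / M)"
  define hi where "hi = min t ((k + 1) / M)"
  have "k / M \<le> (k + 1) / M" using M by (simp add: divide_right_mono)
  then have lohi: "0 \<le> lo" "lo \<le> hi" "hi \<le> t" using M k t by (auto simp: lo_def hi_def)
  have "((\<lambda>x. M) has_integral ((hi - lo) * M)) {lo..hi}"
    using has_integral_const_real[of M lo hi] lohi by simp
  then have "((\<lambda>x. if x \<in> cbox lo hi then M else 0) has_integral ((hi - lo) * M)) (cbox 0 t)"
    using lohi by (intro has_integral_restrict_closed_subinterval) auto
  moreover have "(hi - lo) * M = ramp (M * t - k)"
    using M k t unfolding hi_def lo_def ramp_def by (auto simp: min_def max_def field_simps)
  ultimately have slot: "((\<lambda>x. if x \<in> {lo..hi} then M else 0) has_integral ramp (M * t - k)) {0..t}"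
    by simp
  show ?thesis
  proof (rule has_integral_spike_finite[OF _ _ slot, of "{lo, hi}"])
    fix x assume x: "x \<in> {0..t} - {lo, hi}"
    have "(k \<le> M * x \<and> M * x < k + 1) \<longleftrightarrow> (k / M \<le> x \<and> x < (k + 1) / M)"
      using M by (auto simp: field_simps)
    then show "phase_rate M k x = (if x \<in> {lo..hi} then M else 0)"
      using x M unfolding phase_rate_def lo_def hi_def by (auto simp: min_def split: if_splits)
  qed auto
qed

subsection \<open>Eating algorithms produce no generalized cycle\<close>

lemma eats_unique:
  assumes "strict_linear_order_on (Bundles n p) (R j)"
    and "eats n p R q j t x" "eats n p R q j t y"
  shows "x = y"
proof (rule ccontr)
  assume "x \<noteq> y"
  with assms have "(x, y) \<in> R j" "(y, x) \<in> R j" unfolding eats_def by metis+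
  with assms(1) show False unfolding strict_linear_order_on_def trans_def irrefl_def by blast
qed

lemma eats_imp_better_unavailable:
  assumes "strict_linear_order_on (Bundles n p) (R j)"
    and "eats n p R q j t xh" and "(x, xh) \<in> R j"
  shows "\<not> available n p q t x"
proof
  assume "available n p q t x"
  then have "x = xh \<or> (xh, x) \<in> R j" using assms(2) unfolding eats_def by blast
  with assms(1,3) show False unfolding strict_linear_order_on_def trans_def irrefl_def by blast
qed

context
  fixes n p :: nat and R :: "nat \<Rightarrow> bundl rel" and \<omega> :: "nat \<Rightarrow> real \<Rightarrow> real"
    and q :: "real \<Rightarrow> nat \<Rightarrow> bundl \<Rightarrow> real"
  assumes speeds: "eating_speeds n \<omega>" and run: "eating_run n p R \<omega> q"
begin

lemma eating_run_has_integral: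
  "t \<in> {0..1} \<Longrightarrow> j < n \<Longrightarrow> x \<in> Bundles n p \<Longrightarrow>
    ((\<lambda>\<tau>. if eats n p R q j \<tau> x then \<omega> j \<tau> else 0) has_integral q t j x) {0..t}"
  using run unfolding eating_run_def by blast

lemma eating_run_mono:
  assumes "t1 \<in> {0..1}" "t2 \<in> {0..1}" "t1 \<le> t2" "j < n" "x \<in> Bundles n p"
  shows "q t1 j x \<le> q t2 j x"
  using assms speeds
  by (intro has_integral_subset_le[OF _ eating_run_has_integral eating_run_has_integral])
     (auto simp: eating_speeds_def)

lemma rem_supply_antimono:
  assumes "t1 \<in> {0..1}" "t2 \<in> {0..1}" "t1 \<le> t2"
  shows "rem_supply n p q t2 it \<le> rem_supply n p q t1 it"
  unfolding rem_supply_def using eating_run_mono[OF assms] by (auto intro!: sum_mono)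

lemma eaten_at_some_time:
  assumes "j < n" "x \<in> Bundles n p" "q 1 j x \<noteq> 0"
  shows "\<exists>\<tau>\<in>{0..1}. eats n p R q j \<tau> x"
proof (rule ccontr)
  assume "\<not> ?thesis"
  then have "((\<lambda>\<tau>. if eats n p R q j \<tau> x then \<omega> j \<tau> else 0) has_integral 0) {0..1}"
    by (subst has_integral_cong[of _ _ "\<lambda>_. 0"]) auto
  with eating_run_has_integral[of 1 j x] assms(1,2) have "q 1 j x = 0"
    by (simp add: has_integral_unique)
  with assms(3) show False by simp
qed

lemma improvable_worse_eaten:
  assumes final: "\<And>j x. j < n \<Longrightarrow> x \<in> Bundles n p \<Longrightarrow> P j x = q 1 j x"
    and "improvable n p R P x xh"
  shows "\<exists>\<tau>. \<tau> \<in> {0..1} \<and> (\<exists>j<n. (x, xh) \<in> R j \<and> eats n p R q j \<tau> xh)"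
proof -
  obtain j where j: "j < n" "(x, xh) \<in> R j" "P j xh > 0" "xh \<in> Bundles n p"
    using assms(2) unfolding improvable_def by auto
  then show ?thesis using eaten_at_some_time[of j xh] final by force
qed

lemma eating_run_no_generalized_cycle:
  assumes profile: "is_profile n p R"
    and final: "\<And>j x. j < n \<Longrightarrow> x \<in> Bundles n p \<Longrightarrow> P j x = q 1 j x"
  shows "\<not> generalized_cycle n p R P C"
proof
  assume "generalized_cycle n p R P C"
  then have C: "C \<noteq> {}" "\<And>x xh. (x, xh) \<in> C \<Longrightarrow> improvable n p R P x xh" "item_closed p C"
    unfolding generalized_cycle_iff by auto
  have eaten: "\<forall>c\<in>C. \<exists>\<tau>. \<tau> \<in> {0..1} \<and> (\<exists>j<n. c \<in> R j \<and> eats n p R q j \<tau> (snd c))"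
    using improvable_worse_eaten[OF final C(2)] by (metis prod.collapse)
  obtain T where T: "\<And>c. c \<in> C \<Longrightarrow> T c \<in> {0..1} \<and> (\<exists>j<n. c \<in> R j \<and> eats n p R q j (T c) (snd c))"
    using bchoice[OF eaten] by blast
  have "C \<subseteq> Bundles n p \<times> Bundles n p" using C(2) unfolding improvable_def by auto
  then have "finite C" using finite_Bundles by (meson finite_SigmaI finite_subset)
  then have "Min (T ` C) \<in> T ` C" using C(1) by simp
  then obtain x1 xh1 where c1: "(x1, xh1) \<in> C" "T (x1, xh1) = Min (T ` C)" by auto
  then have first: "T (x1, xh1) \<le> T c" if "c \<in> C" for c using \<open>finite C\<close> that by simp
  obtain j1 where j1: "j1 < n" "(x1, xh1) \<in> R j1" "eats n p R q j1 (T (x1, xh1)) xh1"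
    using T[OF c1(1)] by auto
  have "\<not> available n p q (T (x1, xh1)) x1"
    using eats_imp_better_unavailable[OF is_profile_strict_linear[OF profile j1(1)] j1(3,2)] .
  moreover have "x1 \<in> Bundles n p" using C(2)[OF c1(1)] unfolding improvable_def by blast
  ultimately obtain it where it: "item_in p it x1" "rem_supply n p q (T (x1, xh1)) it \<le> 0"
    unfolding available_def by (meson not_less)
  then obtain c2 where c2: "c2 \<in> C" "item_in p it (snd c2)"
    using C(3) c1(1) unfolding item_closed_def by fastforce
  then have "rem_supply n p q (T c2) it > 0"
    using T unfolding eats_def available_def by blast
  moreover have "rem_supply n p q (T c2) it \<le> rem_supply n p q (T (x1, xh1)) it"
    using rem_supply_antimono T c1(1) c2(1) first by blast
  ultimately show False using it(2) by linarith
qed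

end

subsection \<open>The level-by-level eating schedule\<close>

definition phased_amount :: "real \<Rightarrow> nat \<Rightarrow> (item \<Rightarrow> nat) \<Rightarrow> (nat \<Rightarrow> bundl \<Rightarrow> real)
    \<Rightarrow> real \<Rightarrow> nat \<Rightarrow> bundl \<Rightarrow> real" where
  "phased_amount M p l P t j x = P j x * ramp (M * t - real (min_label p l x))"

definition phased_speed :: "real \<Rightarrow> nat \<Rightarrow> nat \<Rightarrow> (item \<Rightarrow> nat) \<Rightarrow> (nat \<Rightarrow> bundl \<Rightarrow> real)
    \<Rightarrow> nat \<Rightarrow> real \<Rightarrow> real" where
  "phased_speed M n p l P j \<tau> = (\<Sum>x\<in>Bundles n p. P j x * phase_rate M (real (min_label p l x)) \<tau>)"

context
  fixes n p :: nat and R :: "nat \<Rightarrow> bundl rel" and P :: "nat \<Rightarrow> bundl \<Rightarrow> real"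
    and l :: "item \<Rightarrow> nat" and M :: real
  assumes p: "p \<ge> 1" and profile: "is_profile n p R" and assignment: "is_assignment n p P"
    and level_increasing: "\<And>x xh. improvable n p R P x xh \<Longrightarrow> min_label p l x < min_label p l xh"
    and M_pos: "M > 0"
    and M_large: "\<And>y. y \<in> Bundles n p \<Longrightarrow> real (min_label p l y) + 1 \<le> M"
begin

abbreviation (input) in_phase :: "bundl \<Rightarrow> real \<Rightarrow> bool" where
  "in_phase x \<tau> \<equiv> real (min_label p l x) \<le> M * \<tau> \<and> M * \<tau> < real (min_label p l x) + 1"

lemma phased_amount_le: "j < n \<Longrightarrow> x \<in> Bundles n p \<Longrightarrow> phased_amount M p l P t j x \<le> P j x"
  unfolding phased_amount_def using is_assignment_nonneg[OF assignment] ramp_le_one by (simp add: mult_left_le)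

lemma phased_amount_final:
  assumes "x \<in> Bundles n p"
  shows "phased_amount M p l P 1 j x = P j x"
proof -
  have "ramp (M * 1 - real (min_label p l x)) = 1"
    using M_large[OF assms] by (intro ramp_eq_one) simp
  then show ?thesis unfolding phased_amount_def by simp
qed

lemma rem_supply_phased_amount:
  "it \<in> Items n p \<Longrightarrow> rem_supply n p (phased_amount M p l P) \<tau> it =
     (\<Sum>j<n. \<Sum>x\<in>{x\<in>Bundles n p. item_in p it x}. P j x - phased_amount M p l P \<tau> j x)"
  using assignment unfolding is_assignment_def rem_supply_def
  by (simp add: sum_subtractf)

lemma in_phase_unique:
  assumes "j < n" "y \<in> Bundles n p" "y' \<in> Bundles n p" "P j y > 0" "P j y' > 0"
    "in_phase y \<tau>" "in_phase y' \<tau>"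
  shows "y = y'"
proof (rule ccontr)
  assume "y \<noteq> y'"
  then have "(y, y') \<in> R j \<or> (y', y) \<in> R j"
    using is_profile_strict_linear[OF profile] assms unfolding strict_linear_order_on_def total_on_def by blast
  then have "min_label p l y \<noteq> min_label p l y'"
    using level_increasing assms unfolding improvable_def by fastforce
  with assms(6,7) show False by linarith
qed

lemma in_phase_available:
  assumes "j < n" "y \<in> Bundles n p" "P j y > 0" "in_phase y \<tau>"
  shows "available n p (phased_amount M p l P) \<tau> y"
  unfolding available_def
proof (intro conjI allI impI)
  fix it assume it: "item_in p it y"
  let ?X = "{x\<in>Bundles n p. item_in p it x}"
  have "phased_amount M p l P \<tau> j y < P j y"
    using assms ramp_less_one unfolding phased_amount_def by simp
  then have "0 < (\<Sum>x\<in>?X. P j x - phased_amount M p l P \<tau> j x)"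
    using it assms(2) phased_amount_le[OF assms(1)] finite_Bundles
    by (intro sum_pos2[of _ y]) auto
  then have "0 < (\<Sum>j'<n. \<Sum>x\<in>?X. P j' x - phased_amount M p l P \<tau> j' x)"
    using assms(1) phased_amount_le by (intro sum_pos2[of _ j]) (auto intro: sum_nonneg)
  then show "rem_supply n p (phased_amount M p l P) \<tau> it > 0"
    using rem_supply_phased_amount item_in_Items[OF it assms(2)] by simp
qed (use assms in simp)

text \<open>An item of z carrying the level of z belongs only to bundles of level at most that of z,
  and all of these are completely eaten once the slot of z is over.\<close>

lemma past_phase_unavailable:
  assumes "z \<in> Bundles n p" "real (min_label p l z) + 1 \<le> M * \<tau>"
  shows "\<not> available n p (phased_amount M p l P) \<tau> z"
proof -
  obtain i where i: "i < p" "min_label p l z = l (i, z i)" using min_label_attained[OF p] by blast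
  define it where "it = (i, z i)"
  have it: "item_in p it z" unfolding it_def item_in_def using i by auto
  have "phased_amount M p l P \<tau> j x = P j x" if "item_in p it x" for j x
  proof -
    have "min_label p l x \<le> min_label p l z"
      using min_label_item_in[OF that] i(2) unfolding it_def by simp
    with assms(2) show ?thesis unfolding phased_amount_def by (simp add: ramp_eq_one)
  qed
  then have "rem_supply n p (phased_amount M p l P) \<tau> it = 0"
    using rem_supply_phased_amount item_in_Items[OF it assms(1)] by simp
  with it show ?thesis unfolding available_def by (metis order_less_irrefl)
qed

lemma eats_in_phase:
  assumes "j < n" "y \<in> Bundles n p" "P j y > 0" "in_phase y \<tau>"
  shows "eats n p R (phased_amount M p l P) j \<tau> y"
  unfolding eats_def
proof (intro conjI allI impI)
  show "available n p (phased_amount M p l P) \<tau> y" using in_phase_available[OF assms] .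
  fix z assume z: "available n p (phased_amount M p l P) \<tau> z"
  show "z = y \<or> (y, z) \<in> R j"
  proof (rule ccontr)
    assume "\<not> (z = y \<or> (y, z) \<in> R j)"
    then have "(z, y) \<in> R j"
      using is_profile_strict_linear[OF profile assms(1)] assms(2) z
      unfolding strict_linear_order_on_def total_on_def available_def by blast
    then have "min_label p l z < min_label p l y"
      using level_increasing assms z unfolding improvable_def available_def by blast
    then show False
      using past_phase_unavailable[of z \<tau>] z assms(4) unfolding available_def by simp
  qed
qed

lemma eating_rate_phased:
  assumes j: "j < n" and x: "x \<in> Bundles n p"
  shows "(if eats n p R (phased_amount M p l P) j \<tau> x then phased_speed M n p l P j \<tau> else 0) =
    P j x * phase_rate M (real (min_label p l x)) \<tau>"
proof (cases "\<exists>y\<in>Bundles n p. P j y > 0 \<and> in_phase y \<tau>")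
  case True
  then obtain y where y: "y \<in> Bundles n p" "P j y > 0" "in_phase y \<tau>" by blast
  have others: "P j x' * phase_rate M (real (min_label p l x')) \<tau> = 0"
    if "x' \<in> Bundles n p" "x' \<noteq> y" for x'
    using in_phase_unique[OF j y(1) that(1) y(2) _ y(3)] is_assignment_nonneg[OF assignment j that(1)] that(2)
    unfolding phase_rate_def by force
  have "(\<Sum>x\<in>Bundles n p - {y}. P j x * phase_rate M (real (min_label p l x)) \<tau>) = 0"
    using others by (intro sum.neutral) blast
  then have "phased_speed M n p l P j \<tau> = P j y * phase_rate M (real (min_label p l y)) \<tau>"
    unfolding phased_speed_def
    using sum.remove[OF finite_Bundles y(1), of "\<lambda>x. P j x * phase_rate M (real (min_label p l x)) \<tau>"]
    by simp
  moreover have eats_y: "eats n p R (phased_amount M p l P) j \<tau> y" using eats_in_phase[OF j y] .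
  moreover have "\<not> eats n p R (phased_amount M p l P) j \<tau> x" if "x \<noteq> y"
    using eats_unique[of n p R j] is_profile_strict_linear[OF profile j] that eats_y by blast
  ultimately show ?thesis
    using others[OF x] by (cases "x = y") auto
next
  case False
  then have none: "P j x' * phase_rate M (real (min_label p l x')) \<tau> = 0"
    if "x' \<in> Bundles n p" for x'
    using is_assignment_nonneg[OF assignment j that] that unfolding phase_rate_def by force
  then have "phased_speed M n p l P j \<tau> = 0" unfolding phased_speed_def by (intro sum.neutral) blast
  with none[OF x] show ?thesis by simp
qed

lemma phased_eating_run: "eating_run n p R (phased_speed M n p l P) (phased_amount M p l P)"
  unfolding eating_run_def
proof (intro ballI allI impI)
  fix t j x assume t: "t \<in> {0..1::real}" and j: "j < n" and x: "x \<in> Bundles n p"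
  have "((\<lambda>\<tau>. P j x * phase_rate M (real (min_label p l x)) \<tau>) has_integral
      phased_amount M p l P t j x) {0..t}"
    unfolding phased_amount_def using t M_pos
    by (intro has_integral_mult_right has_integral_phase_rate) auto
  then show "((\<lambda>\<tau>. if eats n p R (phased_amount M p l P) j \<tau> x
      then phased_speed M n p l P j \<tau> else 0) has_integral phased_amount M p l P t j x) {0..t}"
    using eating_rate_phased[OF j x] by simp
qed

lemma phased_eating_speeds: "eating_speeds n (phased_speed M n p l P)"
  unfolding eating_speeds_def
proof (intro allI impI conjI)
  fix j assume j: "j < n"
  show "\<forall>t\<in>{0..1}. 0 \<le> phased_speed M n p l P j t"
    unfolding phased_speed_def phase_rate_def
    using is_assignment_nonneg[OF assignment j] M_pos by (auto intro!: sum_nonneg)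
  have "(phased_speed M n p l P j has_integral (\<Sum>x\<in>Bundles n p. phased_amount M p l P 1 j x)) {0..1}"
    unfolding phased_speed_def phased_amount_def using M_pos finite_Bundles
    by (intro has_integral_sum has_integral_mult_right has_integral_phase_rate) auto
  moreover have "(\<Sum>x\<in>Bundles n p. phased_amount M p l P 1 j x) = 1"
    using assignment j phased_amount_final unfolding is_assignment_def by simp
  ultimately have "(phased_speed M n p l P j has_integral 1) {0..1}" by simp
  then show "phased_speed M n p l P j integrable_on {0..1}"
    and "integral {0..1} (phased_speed M n p l P j) = 1"
    by (auto intro: integral_unique)
qed

lemma phased_eating_output: "eating_output n p R (phased_speed M n p l P) P"
  unfolding eating_output_def using phased_eating_run phased_amount_final by auto

end

lemma no_generalized_cycle_imp_level_increasing:
  assumes p: "p \<ge> 1" and no_cycle: "\<not> (\<exists>C. generalized_cycle n p R P C)"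
  obtains l where "\<And>x xh. improvable n p R P x xh \<Longrightarrow> min_label p l x < min_label p l xh"
proof -
  define S where "S = {(x, xh). improvable n p R P x xh}"
  have "S \<subseteq> Bundles n p \<times> Bundles n p" unfolding S_def improvable_def by auto
  then have "finite S" using finite_Bundles by (meson finite_SigmaI finite_subset)
  moreover have "\<not> item_closed p C" if "C \<subseteq> S" "C \<noteq> {}" for C
    using no_cycle that unfolding generalized_cycle_iff S_def by blast
  ultimately obtain l where "\<forall>(x, xh)\<in>S. min_label p l x < min_label p l xh"
    using labelling_of_unclosed[OF _ p] by blast
  then show ?thesis using that unfolding S_def by auto
qed

theorem theorem5:
  fixes n p :: nat and R :: "nat \<Rightarrow> bundl rel" and P :: "nat \<Rightarrow> bundl \<Rightarrow> real"
  assumes "n \<ge> 1" and "p \<ge> 1"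
    and "is_profile n p R"
    and "is_assignment n p P"
  shows "(\<not> (\<exists>C. generalized_cycle n p R P C)) \<longleftrightarrow>
         (\<exists>\<omega>. eating_speeds n \<omega> \<and> eating_output n p R \<omega> P)"
proof
  assume "\<not> (\<exists>C. generalized_cycle n p R P C)"
  then obtain l where l: "\<And>x xh. improvable n p R P x xh \<Longrightarrow> min_label p l x < min_label p l xh"
    using no_generalized_cycle_imp_level_increasing[OF assms(2)] by blast
  define M where "M = real (Max (min_label p l ` Bundles n p)) + 1"
  have M_large: "real (min_label p l y) + 1 \<le> M" if "y \<in> Bundles n p" for y
    unfolding M_def using that finite_Bundles by simp
  have M_pos: "M > 0" unfolding M_def by simp
  show "\<exists>\<omega>. eating_speeds n \<omega> \<and> eating_output n p R \<omega> P"
    using phased_eating_speeds[OF assms(2-4) l M_pos M_large]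
      phased_eating_output[OF assms(2-4) l M_pos M_large] by blast
next
  assume "\<exists>\<omega>. eating_speeds n \<omega> \<and> eating_output n p R \<omega> P"
  then obtain \<omega> q where "eating_speeds n \<omega>" "eating_run n p R \<omega> q"
    "\<And>j x. j < n \<Longrightarrow> x \<in> Bundles n p \<Longrightarrow> P j x = q 1 j x"
    unfolding eating_output_def by blast
  from eating_run_no_generalized_cycle[OF this(1,2) assms(3) this(3)]
  show "\<not> (\<exists>C. generalized_cycle n p R P C)" by blast
qed

end
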